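(* Let $\alpha\in(\pi/8,3\pi/8)$ with $\alpha/\pi\notin\mathbb{Q}$, $\beta=\alpha-\pi/2$, $\rho=0.01$, $A_1=\rho R(\alpha)$, $A_2=\rho R(\beta)$ where $R(\theta)=\begin{bmatrix}\cos\theta&-\sin\theta\\ \sin\theta&\cos\theta\end{bmatrix}$, and $c(x)=x_1^2+2x_2^2$ for $x=[x_1,x_2]^\top\in\mathbb{R}^2$. Then the optimal value function $J^\star$ of $\{A_1,A_2\}$ with cost $c$ is non-differentiable on a dense subset of $\mathbb{R}^2$.
   Context: For the switched linear system $\xi(t+1)=A_{\sigma(t)}\xi(t)$ with switching signal $\sigma:\mathbb{N}\to\{1,2\}$, $\xi(t,x,\sigma)$ denotes the solution with $\xi(0)=x$, and $J^\star(x)=\inf_\sigma\sum_{t=0}^\infty c(\xi(t,x,\sigma))$. *)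

theory Defs
  imports "HOL-Analysis.Analysis"
begin

definition rot :: "real \<Rightarrow> real^2^2" where
  "rot \<theta> = vector [vector [cos \<theta>, - sin \<theta>], vector [sin \<theta>, cos \<theta>]]"

fun sw_sol :: "(nat \<Rightarrow> real^'n^'n) \<Rightarrow> nat \<Rightarrow> real^'n \<Rightarrow> (nat \<Rightarrow> nat) \<Rightarrow> real^'n" where
  "sw_sol A 0 x \<sigma> = x"
| "sw_sol A (Suc t) x \<sigma> = A (\<sigma> t) *v sw_sol A t x \<sigma>"

definition Jstar :: "(nat \<Rightarrow> real^'n^'n) \<Rightarrow> (real^'n \<Rightarrow> real) \<Rightarrow> real^'n \<Rightarrow> ennreal" where
  "Jstar A c x = (INF \<sigma>\<in>{\<sigma>. \<forall>t. \<sigma> t \<in> {1,2}}. (\<Sum>t. ennreal (c (sw_sol A t x \<sigma>))))"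

end

theory Submission
  imports Defs "HOL-Analysis.Kronecker_Approximation_Theorem"
begin

(* Since A_2 = A_1 R(-pi/2), a switching signal only decides how many quarter turns have been
   applied so far, and the cost c is invariant under half turns; so at every time t >= 1 the
   signal can freely choose the cheaper of c(R(t alpha) x) and c(R(t alpha - pi/2) x). Hence J*
   is the series of rho^(2t) times the minimum of two quadratic forms of R(t alpha) x. Where the
   two forms agree, i.e. where R(k alpha) x lies on the diagonal, this minimum has a concave kink,
   which makes the symmetric second difference of J* along a suitable direction at most
   C s^2 - c s with c > 0; no function differentiable at x admits such a bound. Because alpha/pi
   is irrational, k alpha is dense modulo pi, so these points are dense in the plane. *)

lemma rot_mulv_nth:
  "(rot \<theta> *v y) $ 1 = cos \<theta> * y $ 1 - sin \<theta> * y $ 2"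
  "(rot \<theta> *v y) $ 2 = sin \<theta> * y $ 1 + cos \<theta> * y $ 2"
  by (simp_all add: rot_def matrix_vector_mult_def sum_2)

lemma rot_mult: "rot a ** rot b = rot (a + b)"
  by (simp add: rot_def matrix_matrix_mult_def vec_eq_iff forall_2 sum_2 cos_add sin_add
      algebra_simps)

lemma rot_mulv_rot_mulv: "rot a *v (rot b *v y) = rot (a + b) *v y"
  by (simp add: matrix_vector_mul_assoc rot_mult)

lemma rot_zero: "rot 0 = mat 1"
  by (simp add: rot_def mat_def vec_eq_iff forall_2)

lemma rot_diff_multiple_pi: "rot (\<phi> - real m * pi) = (-1) ^ m *\<^sub>R rot \<phi>"
  by (simp add: rot_def vec_eq_iff forall_2 cos_diff sin_diff)

lemma rot_mulv_add_scaleR: "rot \<theta> *v (x + s *\<^sub>R v) = rot \<theta> *v x + s *\<^sub>R (rot \<theta> *v v)"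
  by (simp add: matrix_vector_right_distrib matrix_vector_mult_scaleR)

lemma rot_mulv_diff_scaleR: "rot \<theta> *v (x - s *\<^sub>R v) = rot \<theta> *v x - s *\<^sub>R (rot \<theta> *v v)"
  by (simp add: matrix_vector_mult_diff_distrib matrix_vector_mult_scaleR)

lemma norm_power2_vec2: "norm (y :: real^2) ^ 2 = (y $ 1)^2 + (y $ 2)^2"
  by (simp add: norm_vec_def L2_set_def UNIV_2)

lemma norm_rot_mulv [simp]: "norm (rot \<theta> *v y) = norm y"
proof -
  have "norm (rot \<theta> *v y) ^ 2 = norm y ^ 2"
    unfolding norm_power2_vec2 rot_mulv_nth
    using sin_cos_squared_add[of \<theta>] by algebra
  then show ?thesis by simp
qed

definition cost :: "real^2 \<Rightarrow> real" where
  "cost y = (y $ 1)^2 + 2 * (y $ 2)^2"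

definition cost_swapped :: "real^2 \<Rightarrow> real" where
  "cost_swapped y = 2 * (y $ 1)^2 + (y $ 2)^2"

definition min_cost :: "real^2 \<Rightarrow> real" where
  "min_cost y = min (cost y) (cost_swapped y)"

lemma cost_nonneg: "0 \<le> cost y"
  by (simp add: cost_def)

lemma cost_le_norm: "cost y \<le> 2 * norm y ^ 2"
  by (simp add: cost_def norm_power2_vec2)

lemma cost_scaleR: "cost (r *\<^sub>R y) = r^2 * cost y"
  by (simp add: cost_def power_mult_distrib algebra_simps)

lemma cost_rot_quarter_turn: "cost (rot (\<phi> - pi/2) *v x) = cost_swapped (rot \<phi> *v x)"
  by (simp add: cost_def cost_swapped_def rot_mulv_nth cos_diff sin_diff power2_eq_square
      algebra_simps)

lemma cost_rot_quarter_turns: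
  "cost (rot (\<phi> - real n * pi / 2) *v x) = cost (rot (\<phi> - real (n mod 2) * pi / 2) *v x)"
proof -
  have "real n = real (n mod 2) + 2 * real (n div 2)"
    by (metis mod_mult_div_eq of_nat_add of_nat_mult of_nat_numeral)
  then have "\<phi> - real n * pi / 2 = (\<phi> - real (n mod 2) * pi / 2) - real (n div 2) * pi"
    by (simp add: algebra_simps)
  then show ?thesis
    by (simp only: rot_diff_multiple_pi flip: scaleR_matrix_vector_assoc)
      (simp add: cost_scaleR flip: power_mult)
qed

lemma sw_sol_scaled_rotations:
  assumes "\<And>i. A i = \<rho> *\<^sub>R rot (\<theta> i)"
  shows "sw_sol A t x \<sigma> = \<rho> ^ t *\<^sub>R (rot (\<Sum>s<t. \<theta> (\<sigma> s)) *v x)"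
  by (induction t) (simp_all add: assms rot_zero rot_mulv_rot_mulv matrix_vector_mult_scaleR
      add.commute mult.commute flip: scaleR_matrix_vector_assoc)

definition quarter_turns :: "(nat \<Rightarrow> nat) \<Rightarrow> nat \<Rightarrow> nat" where
  "quarter_turns \<sigma> t = (\<Sum>s<t. if \<sigma> s = 1 then 0 else 1)"

lemma quarter_turns_0 [simp]: "quarter_turns \<sigma> 0 = 0"
  by (simp add: quarter_turns_def)

lemma quarter_turns_Suc:
  "quarter_turns \<sigma> (Suc t) = quarter_turns \<sigma> t + (if \<sigma> t = 1 then 0 else 1)"
  by (simp add: quarter_turns_def)

lemma quarter_turns_parity_realizable:
  assumes "\<not> p 0"
  obtains \<sigma> where "\<forall>t. \<sigma> t \<in> {1, 2}" "\<And>t. odd (quarter_turns \<sigma> t) \<longleftrightarrow> p t"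
proof
  define \<sigma> where "\<sigma> t = (if p (Suc t) = p t then 1 else 2 :: nat)" for t
  show "\<forall>t. \<sigma> t \<in> {1, 2}"
    by (simp add: \<sigma>_def)
  show "odd (quarter_turns \<sigma> t) \<longleftrightarrow> p t" for t
    by (induction t) (auto simp: assms quarter_turns_Suc \<sigma>_def)
qed

lemma cost_sw_sol:
  assumes "A = (\<lambda>i. if i = 1 then \<rho> *\<^sub>R rot \<alpha> else \<rho> *\<^sub>R rot (\<alpha> - pi/2))"
  shows "cost (sw_sol A t x \<sigma>) =
    (\<rho>^2)^t * cost (rot (real t * \<alpha> - real (quarter_turns \<sigma> t mod 2) * pi / 2) *v x)"
proof -
  define \<theta> where "\<theta> i = (if i = 1 then \<alpha> else \<alpha> - pi/2)" for i :: nat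
  have "(\<Sum>s<t. \<theta> (\<sigma> s)) = real t * \<alpha> - real (quarter_turns \<sigma> t) * pi / 2"
  proof (induction t)
    case (Suc t)
    then show ?case
      by (simp add: \<theta>_def quarter_turns_Suc) (simp add: algebra_simps add_divide_distrib)
  qed simp
  moreover have "A i = \<rho> *\<^sub>R rot (\<theta> i)" for i
    by (simp add: assms \<theta>_def)
  ultimately have "sw_sol A t x \<sigma> =
      \<rho>^t *\<^sub>R (rot (real t * \<alpha> - real (quarter_turns \<sigma> t) * pi / 2) *v x)"
    by (simp add: sw_sol_scaled_rotations)
  then show ?thesis
    using cost_rot_quarter_turns[of "real t * \<alpha>" "quarter_turns \<sigma> t" x]
    by (simp add: cost_scaleR mult.commute[of t] flip: power_mult)
qed

definition optimal_stage_cost :: "real \<Rightarrow> nat \<Rightarrow> real^2 \<Rightarrow> real" where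
  "optimal_stage_cost \<alpha> t x = (if t = 0 then cost x else min_cost (rot (real t * \<alpha>) *v x))"

lemma optimal_stage_cost_nonneg: "0 \<le> optimal_stage_cost \<alpha> t x"
  by (simp add: optimal_stage_cost_def min_cost_def cost_swapped_def cost_nonneg)

lemma optimal_stage_cost_le_norm: "optimal_stage_cost \<alpha> t x \<le> 2 * norm x ^ 2"
  using cost_le_norm[of x] cost_le_norm[of "rot (real t * \<alpha>) *v x"]
  by (auto simp: optimal_stage_cost_def min_cost_def)

lemma optimal_stage_cost_le:
  assumes "t = 0 \<Longrightarrow> n = 0"
  shows "optimal_stage_cost \<alpha> t x \<le> cost (rot (real t * \<alpha> - real (n mod 2) * pi / 2) *v x)"
proof (cases "t = 0")
  case False
  have "n mod 2 = 0 \<or> n mod 2 = 1" by presburger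
  with False show ?thesis
    by (auto simp: optimal_stage_cost_def min_cost_def cost_rot_quarter_turn)
qed (simp add: assms optimal_stage_cost_def rot_zero)

lemma optimal_stage_cost_eq:
  assumes "odd n \<longleftrightarrow> t \<noteq> 0 \<and> cost_swapped (rot (real t * \<alpha>) *v x) < cost (rot (real t * \<alpha>) *v x)"
  shows "optimal_stage_cost \<alpha> t x = cost (rot (real t * \<alpha> - real (n mod 2) * pi / 2) *v x)"
proof (cases "odd n")
  case True
  then have "n mod 2 = 1"
    by presburger
  with True assms show ?thesis
    by (simp add: optimal_stage_cost_def min_cost_def cost_rot_quarter_turn)
next
  case False
  then have "n mod 2 = 0"
    by presburger
  with False assms show ?thesis
    by (auto simp: optimal_stage_cost_def min_cost_def rot_zero)
qed

lemma Jstar_eq_suminf_if_attained: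
  assumes "\<And>\<sigma> t. \<forall>t. \<sigma> t \<in> {1, 2} \<Longrightarrow> g t \<le> c (sw_sol A t x \<sigma>)"
    and "\<forall>t. \<sigma>\<^sub>0 t \<in> {1, 2}" and "\<And>t. c (sw_sol A t x \<sigma>\<^sub>0) = g t"
  shows "Jstar A c x = (\<Sum>t. ennreal (g t))"
  unfolding Jstar_def
proof (rule antisym)
  show "(INF \<sigma>\<in>{\<sigma>. \<forall>t. \<sigma> t \<in> {1, 2}}. \<Sum>t. ennreal (c (sw_sol A t x \<sigma>)))
      \<le> (\<Sum>t. ennreal (g t))"
    by (rule INF_lower2[of \<sigma>\<^sub>0]) (use assms(2,3) in auto)
  show "(\<Sum>t. ennreal (g t))
      \<le> (INF \<sigma>\<in>{\<sigma>. \<forall>t. \<sigma> t \<in> {1, 2}}. \<Sum>t. ennreal (c (sw_sol A t x \<sigma>)))"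
  proof (rule INF_greatest)
    fix \<sigma> :: "nat \<Rightarrow> nat"
    assume "\<sigma> \<in> {\<sigma>. \<forall>t. \<sigma> t \<in> {1, 2}}"
    then show "(\<Sum>t. ennreal (g t)) \<le> (\<Sum>t. ennreal (c (sw_sol A t x \<sigma>)))"
      by (intro suminf_le ennreal_leI assms(1)) auto
  qed
qed

lemma summable_optimal_stage_cost:
  assumes "\<bar>\<rho>\<bar> < 1"
  shows "summable (\<lambda>t. (\<rho>^2)^t * optimal_stage_cost \<alpha> t x)"
proof (rule summable_comparison_test)
  show "\<exists>N. \<forall>t\<ge>N. norm ((\<rho>^2)^t * optimal_stage_cost \<alpha> t x) \<le> (\<rho>^2)^t * (2 * norm x ^ 2)"
    by (auto simp: abs_mult optimal_stage_cost_nonneg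
        intro!: mult_left_mono optimal_stage_cost_le_norm)
  show "summable (\<lambda>t. (\<rho>^2)^t * (2 * norm x ^ 2))"
    using assms by (simp add: abs_square_less_1 summable_mult2 summable_geometric)
qed

definition optimal_value :: "real \<Rightarrow> real \<Rightarrow> real^2 \<Rightarrow> real" where
  "optimal_value \<rho> \<alpha> x = (\<Sum>t. (\<rho>^2)^t * optimal_stage_cost \<alpha> t x)"

lemma Jstar_eq_optimal_value:
  assumes "A = (\<lambda>i. if i = 1 then \<rho> *\<^sub>R rot \<alpha> else \<rho> *\<^sub>R rot (\<alpha> - pi/2))" and "\<bar>\<rho>\<bar> < 1"
  shows "enn2real (Jstar A cost x) = optimal_value \<rho> \<alpha> x"
proof -
  define turn_better where
    "turn_better t \<longleftrightarrow> t \<noteq> 0 \<and> cost_swapped (rot (real t * \<alpha>) *v x) < cost (rot (real t * \<alpha>) *v x)"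
    for t
  obtain \<sigma>\<^sub>0 where \<sigma>\<^sub>0: "\<forall>t. \<sigma>\<^sub>0 t \<in> {1, 2}" "\<And>t. odd (quarter_turns \<sigma>\<^sub>0 t) \<longleftrightarrow> turn_better t"
    by (rule quarter_turns_parity_realizable[of turn_better]) (simp_all add: turn_better_def)
  have "Jstar A cost x = (\<Sum>t. ennreal ((\<rho>^2)^t * optimal_stage_cost \<alpha> t x))"
  proof (rule Jstar_eq_suminf_if_attained[OF _ \<sigma>\<^sub>0(1)])
    show "(\<rho>^2)^t * optimal_stage_cost \<alpha> t x \<le> cost (sw_sol A t x \<sigma>)" for \<sigma> t
      by (simp add: cost_sw_sol[OF assms(1)] mult_left_mono optimal_stage_cost_le)
    show "cost (sw_sol A t x \<sigma>\<^sub>0) = (\<rho>^2)^t * optimal_stage_cost \<alpha> t x" for t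
      using optimal_stage_cost_eq[of "quarter_turns \<sigma>\<^sub>0 t" t \<alpha> x] \<sigma>\<^sub>0(2)
      by (simp add: cost_sw_sol[OF assms(1)] turn_better_def)
  qed
  also have "\<dots> = ennreal (\<Sum>t. (\<rho>^2)^t * optimal_stage_cost \<alpha> t x)"
    by (simp add: suminf_ennreal2 optimal_stage_cost_nonneg summable_optimal_stage_cost assms(2))
  finally show ?thesis
    by (simp add: optimal_value_def suminf_nonneg optimal_stage_cost_nonneg
        summable_optimal_stage_cost assms(2))
qed

lemma min_second_difference_le:
  fixes f g :: "'a \<Rightarrow> real"
  shows "min (f p) (g p) + min (f q) (g q) - 2 * min (f a) (g a)
    \<le> max (f p + f q - 2 * f a) (g p + g q - 2 * g a)"
  by (simp add: min_def max_def)

lemma cost_second_difference: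
  "cost (y + s *\<^sub>R b) + cost (y - s *\<^sub>R b) - 2 * cost y = 2 * s^2 * cost b"
  by (simp add: cost_def power2_eq_square algebra_simps)

lemma cost_swapped_second_difference:
  "cost_swapped (y + s *\<^sub>R b) + cost_swapped (y - s *\<^sub>R b) - 2 * cost_swapped y
    = 2 * s^2 * cost_swapped b"
  by (simp add: cost_swapped_def power2_eq_square algebra_simps)

lemma min_cost_second_difference:
  "min_cost (y + s *\<^sub>R b) + min_cost (y - s *\<^sub>R b) - 2 * min_cost y \<le> 4 * s^2 * norm b ^ 2"
proof -
  have "min_cost (y + s *\<^sub>R b) + min_cost (y - s *\<^sub>R b) - 2 * min_cost y
      \<le> max (2 * s^2 * cost b) (2 * s^2 * cost_swapped b)"
    using min_second_difference_le[of cost "y + s *\<^sub>R b" cost_swapped "y - s *\<^sub>R b" y]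
    by (simp only: min_cost_def cost_second_difference cost_swapped_second_difference)
  also have "\<dots> \<le> 4 * s^2 * norm b ^ 2"
    unfolding norm_power2_vec2 cost_def cost_swapped_def by (simp add: algebra_simps)
  finally show ?thesis .
qed

lemma min_cost_second_difference_diagonal:
  assumes "y $ 1 = y $ 2"
  shows "min_cost (y + s *\<^sub>R b) + min_cost (y - s *\<^sub>R b) - 2 * min_cost y
    \<le> 3 * s^2 * norm b ^ 2 - 2 * \<bar>s * y $ 1 * (b $ 1 - b $ 2)\<bar>"
proof -
  have "min_cost y = 3 * (y $ 1)^2"
    using assms by (simp add: min_cost_def cost_def cost_swapped_def)
  \<comment> \<open>Pair the two quadratic forms crosswise at y + s b and y - s b: the linear terms in s no
      longer cancel, and one of the two pairings makes them negative.\<close>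
  then have "cost (y + s *\<^sub>R b) + cost_swapped (y - s *\<^sub>R b)
      = 2 * min_cost y + 3 * s^2 * norm b ^ 2 - 2 * (s * y $ 1 * (b $ 1 - b $ 2))"
    "cost_swapped (y + s *\<^sub>R b) + cost (y - s *\<^sub>R b)
      = 2 * min_cost y + 3 * s^2 * norm b ^ 2 + 2 * (s * y $ 1 * (b $ 1 - b $ 2))"
    using assms unfolding norm_power2_vec2
    by (simp_all add: cost_def cost_swapped_def power2_eq_square algebra_simps)
  moreover have "min_cost z \<le> cost z" "min_cost z \<le> cost_swapped z" for z
    by (simp_all add: min_cost_def)
  ultimately show ?thesis
    by (smt (verit))
qed

lemma optimal_stage_cost_second_difference:
  "optimal_stage_cost \<alpha> t (x + s *\<^sub>R v) + optimal_stage_cost \<alpha> t (x - s *\<^sub>R v)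
    - 2 * optimal_stage_cost \<alpha> t x \<le> 4 * s^2 * norm v ^ 2"
proof (cases "t = 0")
  case True
  have "2 * s^2 * cost v \<le> 2 * s^2 * (2 * norm v ^ 2)"
    by (rule mult_left_mono[OF cost_le_norm]) simp
  with True show ?thesis
    by (simp add: optimal_stage_cost_def cost_second_difference)
next
  case False
  then show ?thesis
    using min_cost_second_difference[of "rot (real t * \<alpha>) *v x" s "rot (real t * \<alpha>) *v v"]
    by (simp add: optimal_stage_cost_def rot_mulv_add_scaleR rot_mulv_diff_scaleR)
qed

lemma optimal_stage_cost_second_difference_diagonal:
  assumes "t \<noteq> 0" and "(rot (real t * \<alpha>) *v x) $ 1 = (rot (real t * \<alpha>) *v x) $ 2"
  shows "optimal_stage_cost \<alpha> t (x + s *\<^sub>R v) + optimal_stage_cost \<alpha> t (x - s *\<^sub>R v)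
      - 2 * optimal_stage_cost \<alpha> t x
    \<le> 3 * s^2 * norm v ^ 2 - 2 * \<bar>s * (rot (real t * \<alpha>) *v x) $ 1
        * ((rot (real t * \<alpha>) *v v) $ 1 - (rot (real t * \<alpha>) *v v) $ 2)\<bar>"
  using min_cost_second_difference_diagonal[OF assms(2), of s "rot (real t * \<alpha>) *v v"] assms(1)
  by (simp add: optimal_stage_cost_def rot_mulv_add_scaleR rot_mulv_diff_scaleR)

lemma has_derivative_along_line:
  fixes F :: "'a::real_normed_vector \<Rightarrow> real"
  assumes "(F has_derivative D) (at x)"
  shows "((\<lambda>s. F (x + s *\<^sub>R v)) has_real_derivative D v) (at 0)"
proof -
  have "((\<lambda>s. x + s *\<^sub>R v) has_derivative (\<lambda>s. s *\<^sub>R v)) (at 0)"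
    by (auto intro!: derivative_eq_intros)
  moreover have "(F has_derivative D) (at (x + 0 *\<^sub>R v))"
    using assms by simp
  ultimately have "((\<lambda>s. F (x + s *\<^sub>R v)) has_derivative (\<lambda>s. D (s *\<^sub>R v))) (at 0)"
    by (rule has_derivative_compose)
  moreover have "(\<lambda>s. D (s *\<^sub>R v)) = (*) (D v)"
    using has_derivative_bounded_linear[OF assms]
    by (simp add: fun_eq_iff linear_simps mult.commute)
  ultimately show ?thesis
    by (simp add: has_field_derivative_def)
qed

lemma not_differentiable_at_concave_kink:
  fixes F :: "'a::real_normed_vector \<Rightarrow> real"
  assumes "c > 0"
    and "\<And>s. s > 0 \<Longrightarrow> F (x + s *\<^sub>R v) + F (x - s *\<^sub>R v) - 2 * F x \<le> C * s^2 - c * s"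
  shows "\<not> F differentiable (at x)"
proof
  assume "F differentiable (at x)"
  then obtain D where D: "(F has_derivative D) (at x)"
    by (auto simp: differentiable_def)
  define g where "g s = F (x + s *\<^sub>R v) + F (x + s *\<^sub>R (- v))" for s :: real
  have "(g has_real_derivative D v + D (- v)) (at 0)"
    unfolding g_def by (intro DERIV_add has_derivative_along_line D)
  moreover have "D v + D (- v) = 0"
    using has_derivative_bounded_linear[OF D] by (simp add: linear_simps)
  ultimately have difference_quotient: "((\<lambda>s. (g s - g 0) / s) \<longlongrightarrow> 0) (at_right 0)"
    by (simp add: has_field_derivative_iff tendsto_mono[OF at_within_le_at])
  have "((\<lambda>s. C * s - c) \<longlongrightarrow> C * 0 - c) (at_right 0)"
    by (intro tendsto_intros)
  moreover note difference_quotient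
  moreover have "\<forall>\<^sub>F s in at_right 0. (g s - g 0) / s \<le> C * s - c"
    using eventually_at_right_less[of 0]
  proof eventually_elim
    case (elim s)
    then have "g s - g 0 \<le> (C * s - c) * s"
      using assms(2)[of s] by (simp add: g_def power2_eq_square algebra_simps)
    with elim show ?case
      by (simp add: pos_divide_le_eq)
  qed
  ultimately have "0 \<le> C * 0 - c"
    by (rule tendsto_le[OF trivial_limit_at_right_real])
  with assms(1) show False
    by simp
qed

lemma optimal_value_second_difference:
  assumes "\<bar>\<rho>\<bar> < 1" and "k \<noteq> 0"
    and diagonal: "(rot (real k * \<alpha>) *v x) $ 1 = (rot (real k * \<alpha>) *v x) $ 2"
  shows "optimal_value \<rho> \<alpha> (x + s *\<^sub>R v) + optimal_value \<rho> \<alpha> (x - s *\<^sub>R v)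
      - 2 * optimal_value \<rho> \<alpha> x
    \<le> 4 * s^2 * norm v ^ 2 / (1 - \<rho>^2) - 2 * (\<rho>^2)^k * \<bar>s * (rot (real k * \<alpha>) *v x) $ 1
        * ((rot (real k * \<alpha>) *v v) $ 1 - (rot (real k * \<alpha>) *v v) $ 2)\<bar>"
    (is "_ \<le> _ - 2 * _ * ?K")
proof -
  define w where "w = \<rho>^2"
  have w: "0 \<le> w" "w < 1"
    using assms(1) by (simp_all add: w_def abs_square_less_1)
  let ?\<Delta> = "\<lambda>t. w^t * optimal_stage_cost \<alpha> t (x + s *\<^sub>R v)
    + w^t * optimal_stage_cost \<alpha> t (x - s *\<^sub>R v) - 2 * (w^t * optimal_stage_cost \<alpha> t x)"
  let ?bound = "\<lambda>t. w^t * (4 * s^2 * norm v ^ 2 - (if t = k then 2 * ?K else 0))"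
  have "?\<Delta> t \<le> ?bound t" for t
  proof -
    have "optimal_stage_cost \<alpha> t (x + s *\<^sub>R v) + optimal_stage_cost \<alpha> t (x - s *\<^sub>R v)
        - 2 * optimal_stage_cost \<alpha> t x \<le> 4 * s^2 * norm v ^ 2 - (if t = k then 2 * ?K else 0)"
      using optimal_stage_cost_second_difference[of \<alpha> t x s v]
        optimal_stage_cost_second_difference_diagonal[OF assms(2) diagonal, of s v]
      by (cases "t = k") (auto intro: order_trans)
    then have "w^t * (optimal_stage_cost \<alpha> t (x + s *\<^sub>R v) + optimal_stage_cost \<alpha> t (x - s *\<^sub>R v)
        - 2 * optimal_stage_cost \<alpha> t x) \<le> ?bound t"
      using w by (simp add: mult_left_mono)
    then show ?thesis
      by (simp add: algebra_simps)
  qed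
  moreover have "?\<Delta> sums (optimal_value \<rho> \<alpha> (x + s *\<^sub>R v) + optimal_value \<rho> \<alpha> (x - s *\<^sub>R v)
      - 2 * optimal_value \<rho> \<alpha> x)"
    using summable_optimal_stage_cost[OF assms(1)] unfolding optimal_value_def w_def
    by (intro sums_diff sums_add sums_mult summable_sums)
  moreover have "?bound sums (4 * s^2 * norm v ^ 2 / (1 - w) - 2 * w^k * ?K)"
  proof -
    have "(\<lambda>t. 4 * s^2 * norm v ^ 2 * w^t - (if t = k then 2 * w^k * ?K else 0))
        sums (4 * s^2 * norm v ^ 2 * (1 / (1 - w)) - 2 * w^k * ?K)"
      using w by (intro sums_diff sums_mult geometric_sums sums_single) simp
    moreover have "?bound = (\<lambda>t. 4 * s^2 * norm v ^ 2 * w^t - (if t = k then 2 * w^k * ?K else 0))"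
      by (simp add: fun_eq_iff algebra_simps)
    ultimately show ?thesis
      by simp
  qed
  ultimately show ?thesis
    unfolding w_def[symmetric] by (rule sums_le)
qed

lemma optimal_value_not_differentiable:
  assumes "0 < \<bar>\<rho>\<bar>" "\<bar>\<rho>\<bar> < 1" and "k \<noteq> 0"
    and diagonal: "(rot (real k * \<alpha>) *v x) $ 1 = (rot (real k * \<alpha>) *v x) $ 2"
    and "(rot (real k * \<alpha>) *v x) $ 1 \<noteq> 0"
  shows "\<not> optimal_value \<rho> \<alpha> differentiable (at x)"
proof (rule not_differentiable_at_concave_kink)
  define v where "v = rot (- (real k * \<alpha>)) *v axis 1 1"
  have v: "rot (real k * \<alpha>) *v v = axis 1 1" "norm v = 1"
    by (simp_all add: v_def rot_mulv_rot_mulv rot_zero)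
  show "0 < 2 * (\<rho>^2)^k * \<bar>(rot (real k * \<alpha>) *v x) $ 1\<bar>"
    using assms(1,5) by simp
  fix s :: real
  assume "0 < s"
  then show "optimal_value \<rho> \<alpha> (x + s *\<^sub>R v) + optimal_value \<rho> \<alpha> (x - s *\<^sub>R v)
      - 2 * optimal_value \<rho> \<alpha> x
    \<le> 4 / (1 - \<rho>^2) * s^2 - 2 * (\<rho>^2)^k * \<bar>(rot (real k * \<alpha>) *v x) $ 1\<bar> * s"
    using optimal_value_second_difference[OF assms(2,3) diagonal, of s v]
    by (simp only: v) (simp add: axis_def abs_mult algebra_simps)
qed

lemma dense_shifted_multiples_mod_pi:
  assumes "\<alpha> / pi \<notin> \<rat>"
  shows "closure {\<phi> + of_int h * pi - real k * \<alpha> | h k. k \<noteq> 0} = UNIV"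
proof -
  have "z \<in> closure {\<phi> + of_int h * pi - real k * \<alpha> | h k. k \<noteq> 0}" for z
    unfolding closure_approachable
  proof (intro allI impI)
    fix e :: real
    assume "e > 0"
    obtain h k where "k > 0"
      and hk: "\<bar>of_int k * (\<alpha> / pi) - of_int h - (\<phi> - z) / pi\<bar> < e / pi"
      by (rule sequence_of_fractional_parts_is_dense[of "\<alpha> / pi" "e / pi" "(\<phi> - z) / pi"])
        (use assms \<open>e > 0\<close> in auto)
    let ?X = "of_int k * (\<alpha> / pi) - of_int h - (\<phi> - z) / pi"
    have "pi * ?X = z - (\<phi> + of_int h * pi - real (nat k) * \<alpha>)"
      using \<open>k > 0\<close> by (simp add: field_simps)
    then have "dist (\<phi> + of_int h * pi - real (nat k) * \<alpha>) z = pi * \<bar>?X\<bar>"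
      by (metis abs_minus_commute abs_mult abs_of_pos dist_real_def pi_gt_zero)
    also have "\<dots> < e"
      using hk by (simp add: less_divide_eq mult.commute)
    finally have "dist (\<phi> + of_int h * pi - real (nat k) * \<alpha>) z < e" .
    moreover have "nat k \<noteq> 0"
      using \<open>k > 0\<close> by simp
    ultimately show "\<exists>y\<in>{\<phi> + of_int h * pi - real k * \<alpha> | h k. k \<noteq> 0}. dist y z < e"
      by blast
  qed
  then show ?thesis by auto
qed

definition polar :: "real \<times> real \<Rightarrow> real^2" where
  "polar p = (\<chi> i. if i = 1 then fst p * cos (snd p) else fst p * sin (snd p))"

lemma polar_nth [simp]: "polar (r, \<phi>) $ 1 = r * cos \<phi>" "polar (r, \<phi>) $ 2 = r * sin \<phi>"
  by (simp_all add: polar_def)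

lemma rot_mulv_polar: "rot \<theta> *v polar (r, \<phi>) = polar (r, \<theta> + \<phi>)"
  by (simp add: vec_eq_iff forall_2 rot_mulv_nth cos_add sin_add algebra_simps)

lemma continuous_on_polar: "continuous_on UNIV polar"
  unfolding polar_def
proof (intro continuous_on_vec_lambda)
  show "continuous_on UNIV
      (\<lambda>p :: real \<times> real. if i = 1 then fst p * cos (snd p) else fst p * sin (snd p))" for i :: 2
    by (cases "i = 1") (auto intro!: continuous_intros)
qed

lemma surj_polar: "surj polar"
proof -
  have "y \<in> range polar" for y :: "real^2"
  proof (cases "y = 0")
    case True
    then have "y = polar (0, 0)"
      by (simp add: vec_eq_iff forall_2)
    then show ?thesis by blast
  next
    case False
    then have "norm y > 0" by simp
    have "(y $ 1 / norm y)^2 + (y $ 2 / norm y)^2 = norm y ^ 2 / norm y ^ 2"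
      by (simp only: power_divide norm_power2_vec2 add_divide_distrib)
    with \<open>norm y > 0\<close> have "(y $ 1 / norm y)^2 + (y $ 2 / norm y)^2 = 1"
      by simp
    then obtain \<phi> where "y $ 1 / norm y = cos \<phi>" "y $ 2 / norm y = sin \<phi>"
      by (rule sincos_total_2pi)
    with \<open>norm y > 0\<close> have "y $ 1 = norm y * cos \<phi>" "y $ 2 = norm y * sin \<phi>"
      by (simp_all add: divide_eq_eq)
    then have "y = polar (norm y, \<phi>)"
      by (simp add: vec_eq_iff forall_2)
    then show ?thesis by blast
  qed
  then show ?thesis by auto
qed

lemma closure_continuous_surj_image:
  assumes "continuous_on UNIV f" "surj f" "closure S = UNIV"
  shows "closure (f ` S) = UNIV"
  using continuous_image_closure_subset[of UNIV f S] assms by auto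

definition kink_points :: "real \<Rightarrow> (real^2) set" where
  "kink_points \<alpha> = {x. \<exists>k. k \<noteq> 0 \<and> (rot (real k * \<alpha>) *v x) $ 1 = (rot (real k * \<alpha>) *v x) $ 2
                             \<and> (rot (real k * \<alpha>) *v x) $ 1 \<noteq> 0}"

lemma closure_kink_points:
  assumes "\<alpha> / pi \<notin> \<rat>"
  shows "closure (kink_points \<alpha>) = UNIV"
proof -
  define \<Phi> where "\<Phi> = {pi/4 + of_int h * pi - real k * \<alpha> | h k. k \<noteq> 0}"
  have "closure \<Phi> = UNIV"
    unfolding \<Phi>_def by (rule dense_shifted_multiples_mod_pi[OF assms])
  moreover have "closure (- {0 :: real}) = UNIV"
    by (simp add: closure_complement)
  ultimately have "closure ((- {0 :: real}) \<times> \<Phi>) = UNIV"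
    by (simp add: closure_Times)
  then have "closure (polar ` ((- {0}) \<times> \<Phi>)) = UNIV"
    by (rule closure_continuous_surj_image[OF continuous_on_polar surj_polar])
  moreover have "polar (r, \<phi>) \<in> kink_points \<alpha>" if "r \<noteq> 0" "\<phi> \<in> \<Phi>" for r \<phi>
  proof -
    obtain h k where "k \<noteq> 0" "\<phi> = pi/4 + of_int h * pi - real k * \<alpha>"
      using \<open>\<phi> \<in> \<Phi>\<close> unfolding \<Phi>_def by blast
    then have rotated: "rot (real k * \<alpha>) *v polar (r, \<phi>) = polar (r, pi/4 + of_int h * pi)"
      by (simp add: rot_mulv_polar)
    have "sin (of_int h * pi) = 0"
      by (simp add: sin_times_pi_eq_0)
    moreover from this have "cos (of_int h * pi) \<noteq> 0"
      using sin_cos_squared_add[of "of_int h * pi"] by auto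
    ultimately have "cos (pi/4 + of_int h * pi) = sin (pi/4 + of_int h * pi)"
      "cos (pi/4 + of_int h * pi) \<noteq> 0"
      by (simp_all add: cos_add sin_add cos_45 sin_45)
    with rotated \<open>k \<noteq> 0\<close> \<open>r \<noteq> 0\<close> show ?thesis
      unfolding kink_points_def by (intro CollectI exI[of _ k]) simp
  qed
  then have "polar ` ((- {0}) \<times> \<Phi>) \<subseteq> kink_points \<alpha>"
    by auto
  ultimately show ?thesis
    using closure_mono by blast
qed

theorem corollary3:
  fixes \<alpha> \<beta> \<rho> :: real and A :: "nat \<Rightarrow> real^2^2" and c :: "real^2 \<Rightarrow> real"
  assumes "pi / 8 < \<alpha>" "\<alpha> < 3 * pi / 8" "\<alpha> / pi \<notin> \<rat>"
    and "\<beta> = \<alpha> - pi / 2" and "\<rho> = 1 / 100"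
    and "A = (\<lambda>i. if i = 1 then \<rho> *\<^sub>R rot \<alpha> else \<rho> *\<^sub>R rot \<beta>)"
    and "c = (\<lambda>x. (x $ 1)\<^sup>2 + 2 * (x $ 2)\<^sup>2)"
  shows "\<exists>D::(real^2) set. closure D = UNIV \<and>
           (\<forall>x\<in>D. \<not> ((\<lambda>y. enn2real (Jstar A c y)) differentiable (at x)))"
proof -
  have A: "A = (\<lambda>i. if i = 1 then \<rho> *\<^sub>R rot \<alpha> else \<rho> *\<^sub>R rot (\<alpha> - pi/2))"
    unfolding assms(4,6) ..
  have "c = cost"
    using assms(7) by (simp add: fun_eq_iff cost_def)
  have \<rho>: "0 < \<bar>\<rho>\<bar>" "\<bar>\<rho>\<bar> < 1"
    using assms(5) by simp_all
  have "(\<lambda>y. enn2real (Jstar A c y)) = optimal_value \<rho> \<alpha>"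
    unfolding \<open>c = cost\<close> using Jstar_eq_optimal_value[OF A \<rho>(2)] by auto
  moreover have "\<forall>x\<in>kink_points \<alpha>. \<not> optimal_value \<rho> \<alpha> differentiable (at x)"
    unfolding kink_points_def using optimal_value_not_differentiable[OF \<rho>] by blast
  ultimately show ?thesis
    using closure_kink_points[OF assms(3)] by auto
qed

end
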